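(* Let $X$ be a proper metric space and $Y$ a geodesic metric space. Let $F\colon X\to Y$ be an $L$-Lipschitz quotient mapping, and suppose $F$ is injective on $B(x,r)$ for some $x\in X$, $r>0$. Then $F$ is $L$-bilipschitz on $B(x,r/(1+2L^2))$, i.e. $L^{-1}d(p,q)\le d(F(p),F(q))\le L\,d(p,q)$ for all $p,q\in B(x,r/(1+2L^2))$.
   Context: A metric space is proper if closed balls are compact, and geodesic if any two points are joined by a curve whose length equals their distance. $F$ is an $L$-Lipschitz quotient ($L$-LQ) mapping, $L\ge1$, if $B(F(x),r/L)\subseteq F(B(x,r))\subseteq B(F(x),Lr)$ for all $x\in X$, $r>0$ ($B$ = open balls). *)

theory Defs
  imports "HOL-Analysis.Analysis"
begin

definition proper_space :: "'a::metric_space itself \<Rightarrow> bool" where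
  "proper_space _ \<longleftrightarrow> (\<forall>(x::'a) r. compact (cball x r))"

definition curve_length :: "(real \<Rightarrow> 'a::metric_space) \<Rightarrow> ereal" where
  "curve_length g =
     (SUP nt \<in> {(n::nat, t::nat \<Rightarrow> real). t 0 = 0 \<and> t n = 1 \<and> (\<forall>i<n. t i \<le> t (Suc i))}.
        ereal (\<Sum>i<fst nt. dist (g (snd nt i)) (g (snd nt (Suc i)))))"

definition geodesic_space :: "'a::metric_space itself \<Rightarrow> bool" where
  "geodesic_space _ \<longleftrightarrow>
     (\<forall>p q::'a. \<exists>g. continuous_on {0..1} g \<and> g 0 = p \<and> g 1 = q
                    \<and> curve_length g = ereal (dist p q))"

definition LQ_map :: "real \<Rightarrow> ('a::metric_space \<Rightarrow> 'b::metric_space) \<Rightarrow> bool" where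
  "LQ_map L F \<longleftrightarrow> (\<forall>x r. r > 0 \<longrightarrow>
      ball (F x) (r / L) \<subseteq> F ` ball x r \<and> F ` ball x r \<subseteq> ball (F x) (L * r))"

end

theory Submission
  imports Defs
begin

text \<open>The upper bound holds globally. For the lower bound, let s = d(F p, F q):
  co-Lipschitzness puts a preimage of F q into every ball B(p, t) with t > L s, and once
  that ball lies in the region of injectivity the preimage is q itself, so d(p, q) \<le> L s.
  On the ball of radius r/(1 + 2L^2) the upper bound keeps L s below 2L^2 times that
  radius, which leaves enough room.\<close>

lemma LQ_map_ball_subset_image:
  assumes "LQ_map L F" and "r > 0"
  shows "ball (F x) (r / L) \<subseteq> F ` ball x r"
  using assms unfolding LQ_map_def by blast

lemma LQ_map_image_subset_ball:
  assumes "LQ_map L F" and "r > 0"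
  shows "F ` ball x r \<subseteq> ball (F x) (L * r)"
  using assms unfolding LQ_map_def by blast

lemma LQ_map_pos:
  assumes "LQ_map L F"
  shows "L > 0"
proof (rule ccontr)
  assume "\<not> L > 0"
  then have "ball (F x) (L * 1) = {}" for x
    by (simp add: mult_le_0_iff)
  moreover have "F x \<in> F ` ball x 1" for x
    by simp
  ultimately show False
    using LQ_map_image_subset_ball[OF assms zero_less_one] by blast
qed

lemma LQ_map_dist_le:
  assumes "LQ_map L F"
  shows "dist (F p) (F q) \<le> L * dist p q"
proof (rule dense_ge)
  fix w
  assume w: "L * dist p q < w"
  have L: "L > 0"
    using assms by (rule LQ_map_pos)
  have "w / L > 0"
    using w L by (smt (verit) zero_le_dist mult_nonneg_nonneg divide_pos_pos)
  moreover have "F q \<in> F ` ball p (w / L)"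
    using w L by (simp add: field_simps)
  ultimately have "F q \<in> ball (F p) (L * (w / L))"
    by (rule subsetD[OF LQ_map_image_subset_ball[OF assms]])
  then show "dist (F p) (F q) \<le> w"
    using L by simp
qed

lemma LQ_map_dist_ge_local:
  assumes "LQ_map L F"
    and "inj_on F (ball p R)"
    and "q \<in> ball p R"
    and "L * dist (F p) (F q) < R"
  shows "dist p q \<le> L * dist (F p) (F q)"
  using assms(4)
proof (rule dense_ge_bounded)
  fix t
  assume t: "L * dist (F p) (F q) < t" "t < R"
  have L: "L > 0"
    using assms(1) by (rule LQ_map_pos)
  then have "t > 0"
    using t(1) by (smt (verit) zero_le_dist mult_nonneg_nonneg)
  moreover have "F q \<in> ball (F p) (t / L)"
    using t(1) L by (simp add: field_simps)
  ultimately have "F q \<in> F ` ball p t"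
    by (rule subsetD[OF LQ_map_ball_subset_image[OF assms(1)]])
  then obtain q' where q': "q' \<in> ball p t" "F q' = F q"
    by (auto simp: image_iff)
  moreover have "q' \<in> ball p R"
    using q'(1) t(2) by simp
  ultimately have "q' = q"
    using assms(2,3) by (meson inj_onD)
  then show "dist p q \<le> t"
    using q'(1) by simp
qed

lemma ball_minus_dist_subset_ball:
  fixes x p :: "'a::metric_space"
  shows "ball p (r - dist x p) \<subseteq> ball x r"
proof
  fix y
  assume "y \<in> ball p (r - dist x p)"
  then show "y \<in> ball x r"
    using dist_triangle[of x y p] by simp
qed

lemma LQ_map_dist_ge_within_ball:
  assumes "LQ_map L F"
    and "inj_on F (ball x r)"
    and "dist x p + dist p q < r"
    and "dist x p + L * dist (F p) (F q) < r"
  shows "dist p q \<le> L * dist (F p) (F q)"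
proof (rule LQ_map_dist_ge_local[OF assms(1)])
  show "inj_on F (ball p (r - dist x p))"
    using assms(2) ball_minus_dist_subset_ball by (rule inj_on_subset)
qed (use assms(3,4) in auto)

theorem lemma3p6:
  fixes F :: "'a::metric_space \<Rightarrow> 'b::metric_space"
    and L r :: real and x :: 'a
  assumes "proper_space TYPE('a)"
    and "geodesic_space TYPE('b)"
    and "L \<ge> 1"
    and "LQ_map L F"
    and "r > 0"
    and "inj_on F (ball x r)"
  shows "\<forall>p \<in> ball x (r / (1 + 2 * L\<^sup>2)). \<forall>q \<in> ball x (r / (1 + 2 * L\<^sup>2)).
           dist p q / L \<le> dist (F p) (F q) \<and> dist (F p) (F q) \<le> L * dist p q"
proof (intro ballI conjI)
  define \<rho> where "\<rho> = r / (1 + 2 * L\<^sup>2)"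
  have "1 + 2 * L\<^sup>2 \<noteq> 0"
    by (smt (verit) zero_le_power2)
  then have "(1 + 2 * L\<^sup>2) * \<rho> = r"
    unfolding \<rho>_def by simp
  then have r: "r = \<rho> + L\<^sup>2 * (2 * \<rho>)"
    by (simp add: algebra_simps)
  fix p q
  assume "p \<in> ball x \<rho>" "q \<in> ball x \<rho>"
  then have "dist x p < \<rho>" "dist p q < 2 * \<rho>"
    using dist_triangle[of p q x] by (auto simp: dist_commute)
  then have room: "dist x p + L\<^sup>2 * dist p q < r"
    unfolding r by (smt (verit) mult_left_mono zero_le_power2)
  have upper: "dist (F p) (F q) \<le> L * dist p q"
    using assms(4) by (rule LQ_map_dist_le)
  then have "L * dist (F p) (F q) \<le> L\<^sup>2 * dist p q"
    using assms(3) by (simp add: power2_eq_square mult_left_mono)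
  moreover have "dist p q \<le> L\<^sup>2 * dist p q"
    using assms(3) by (intro mult_le_cancel_right1[THEN iffD2]) (simp add: one_le_power)
  ultimately have "dist p q \<le> L * dist (F p) (F q)"
    using room by (intro LQ_map_dist_ge_within_ball[OF assms(4,6)]) linarith+
  then show "dist p q / L \<le> dist (F p) (F q)"
    using assms(3) by (simp add: divide_le_eq mult.commute)
  show "dist (F p) (F q) \<le> L * dist p q"
    by (rule upper)
qed

end
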